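(* Fix a start pose $\mathbf{p}_0=(x_0,y_0,\theta_0)$ and CCC inputs $\mathbf{u}_i=(v_i,\omega_i)$, $i=1,2,3$, with $v_i>0$, $\omega_i\neq0$, $\operatorname{sign}\omega_1\neq\operatorname{sign}\omega_2$, $\operatorname{sign}\omega_2\neq\operatorname{sign}\omega_3$. A pose $\mathbf{p}_f=(x_f,y_f,\theta_f)$ is reachable from $\mathbf{p}_0$ by the CCC path with these inputs if and only if $$r_{31}^2\ \le\ (x_f-c)^2+(y_f-d)^2\ \le\ (r_{12}-r_{23})^2,$$ where $c=x_0-r_1\sin\theta_0+r_3\sin\theta_f$ and $d=y_0+r_1\cos\theta_0-r_3\cos\theta_f$.
   Context: A pose is $\mathbf{p}=(x,y,\theta)$, heading understood modulo $2\pi$. An input is $\mathbf{u}=(v,\omega)$. The motion primitive $\mathrm{M}_{\mathbf{u},\tau}$ maps $(x,y,\theta)$ to: if $\omega\neq0$, $\big(x-\frac{v}{\omega}(\sin\theta-\sin(\theta+\omega\tau)),\ y+\frac{v}{\omega}(\cos\theta-\cos(\theta+\omega\tau)),\ \theta+\omega\tau\big)$; if $\omega=0$, $(x+v\tau\cos\theta,\ y+v\tau\sin\theta,\ \theta)$. For a fixed path type with fixed inputs $\mathbf{u}_1,\mathbf{u}_2,\mathbf{u}_3$, a pose $\mathbf{p}_f$ is reachable from $\mathbf{p}_0$ if there exist durations $\tau_1,\tau_2,\tau_3\ge0$, with $|\omega_i\tau_i|<2\pi$ for each turning segment, such that $\mathrm{M}_{\mathbf{u}_3,\tau_3}(\mathrm{M}_{\mathbf{u}_2,\tau_2}(\mathrm{M}_{\mathbf{u}_1,\tau_1}(\mathbf{p}_0)))$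 has position $(x_f,y_f)$ and heading congruent to $\theta_f$ modulo $2\pi$. Notation: $r_i=v_i/\omega_i$, $r_{ij}=r_i-r_j$. *)

theory Defs
  imports Complex_Main
begin

type_synonym pose = "real \<times> real \<times> real"   (* (x, y, theta) *)
type_synonym input = "real \<times> real"          (* (v, omega) *)

definition motion :: "input \<Rightarrow> real \<Rightarrow> pose \<Rightarrow> pose" where
  "motion u \<tau> p = (let (v, \<omega>) = u; (x, y, \<theta>) = p in
     if \<omega> \<noteq> 0 then
       (x - v / \<omega> * (sin \<theta> - sin (\<theta> + \<omega> * \<tau>)),
        y + v / \<omega> * (cos \<theta> - cos (\<theta> + \<omega> * \<tau>)),
        \<theta> + \<omega> * \<tau>)
     else (x + v * \<tau> * cos \<theta>, y + v * \<tau> * sin \<theta>, \<theta>))"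

definition admissible_dur :: "input \<Rightarrow> real \<Rightarrow> bool" where
  "admissible_dur u \<tau> \<longleftrightarrow> \<tau> \<ge> 0 \<and> (snd u \<noteq> 0 \<longrightarrow> \<bar>snd u * \<tau>\<bar> < 2 * pi)"

definition reachable3 :: "input \<Rightarrow> input \<Rightarrow> input \<Rightarrow> pose \<Rightarrow> pose \<Rightarrow> bool" where
  "reachable3 u1 u2 u3 p0 pf \<longleftrightarrow>
     (\<exists>\<tau>1 \<tau>2 \<tau>3. admissible_dur u1 \<tau>1 \<and> admissible_dur u2 \<tau>2 \<and> admissible_dur u3 \<tau>3 \<and>
        (let q = motion u3 \<tau>3 (motion u2 \<tau>2 (motion u1 \<tau>1 p0)) in
           fst q = fst pf \<and> fst (snd q) = fst (snd pf) \<and>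
           (\<exists>k::int. snd (snd q) = snd (snd pf) + 2 * pi * of_int k)))"

end

theory Submission
  imports Defs
begin

text \<open>After three turns the vehicle sits at
  \<open>(c, d) + (r\<^sub>1\<^sub>2 sin \<theta>\<^sub>1 + r\<^sub>2\<^sub>3 sin \<theta>\<^sub>2, -(r\<^sub>1\<^sub>2 cos \<theta>\<^sub>1 + r\<^sub>2\<^sub>3 cos \<theta>\<^sub>2))\<close>,
  where \<open>\<theta>\<^sub>1, \<theta>\<^sub>2\<close> are the headings after the first two arcs and the final heading enters only
  through \<open>(c, d)\<close>. Since each arc may sweep any angle in \<open>[0, 2\<pi>)\<close>, the headings
  \<open>\<theta>\<^sub>1, \<theta>\<^sub>2, \<theta>\<^sub>f\<close> can be prescribed freely, so the reachable positions form the set of sums of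
  two vectors of lengths \<open>|r\<^sub>1\<^sub>2|\<close> and \<open>|r\<^sub>2\<^sub>3|\<close>: the annulus with radii
  \<open>||r\<^sub>1\<^sub>2| - |r\<^sub>2\<^sub>3||\<close> and \<open>|r\<^sub>1\<^sub>2| + |r\<^sub>2\<^sub>3|\<close>. Alternating turning directions make
  \<open>r\<^sub>1\<^sub>2\<close> and \<open>r\<^sub>2\<^sub>3\<close> of opposite signs, turning these radii into \<open>|r\<^sub>3\<^sub>1|\<close> and
  \<open>|r\<^sub>1\<^sub>2 - r\<^sub>2\<^sub>3|\<close>.\<close>

lemma sin_cos_add_2pi_int:
  "sin (x + 2 * pi * of_int k) = sin x" "cos (x + 2 * pi * of_int k) = cos x"
  by (simp_all add: sin_add cos_add)

lemma reduce_mod_2pi: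
  fixes x :: real
  obtains k :: int where "0 \<le> x - 2 * pi * of_int k" "x - 2 * pi * of_int k < 2 * pi"
proof
  define k where "k = \<lfloor>x / (2 * pi)\<rfloor>"
  have "of_int k \<le> x / (2 * pi)" "x / (2 * pi) < of_int k + 1"
    unfolding k_def by linarith+
  then show "0 \<le> x - 2 * pi * of_int k" "x - 2 * pi * of_int k < 2 * pi"
    by (simp_all add: field_simps)
qed

lemma admissible_turn_to_angle:
  assumes "\<omega> \<noteq> 0"
  obtains \<tau> and k :: int
  where "admissible_dur (v, \<omega>) \<tau>" "\<theta> + \<omega> * \<tau> = \<phi> + 2 * pi * of_int k"
proof (cases "\<omega> > 0")
  case True
  obtain k :: int where k: "0 \<le> \<phi> - \<theta> - 2 * pi * of_int k" "\<phi> - \<theta> - 2 * pi * of_int k < 2 * pi"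
    using reduce_mod_2pi .
  show ?thesis
    by (rule that[of "(\<phi> - \<theta> - 2 * pi * of_int k) / \<omega>" "- k"])
       (use True k in \<open>auto simp: admissible_dur_def\<close>)
next
  case False
  with assms have neg: "\<omega> < 0" by simp
  obtain k :: int where k: "0 \<le> \<theta> - \<phi> - 2 * pi * of_int k" "\<theta> - \<phi> - 2 * pi * of_int k < 2 * pi"
    using reduce_mod_2pi .
  show ?thesis
    by (rule that[of "(\<theta> - \<phi> - 2 * pi * of_int k) / - \<omega>" k])
       (use neg k in \<open>auto simp: admissible_dur_def divide_nonneg_neg\<close>)
qed

lemma polar_coordinates:
  fixes P Q :: real
  obtains \<beta> where "P = sqrt (P\<^sup>2 + Q\<^sup>2) * cos \<beta>" "Q = sqrt (P\<^sup>2 + Q\<^sup>2) * sin \<beta>"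
proof (cases "P\<^sup>2 + Q\<^sup>2 = 0")
  case True
  then show ?thesis
    using that[of 0] by (simp add: sum_power2_eq_zero_iff)
next
  case False
  define \<rho> where "\<rho> = sqrt (P\<^sup>2 + Q\<^sup>2)"
  have "\<rho> > 0" and \<rho>2: "\<rho>\<^sup>2 = P\<^sup>2 + Q\<^sup>2"
    using False by (simp_all add: \<rho>_def add_pos_nonneg order_le_neq_trans)
  then have "(P / \<rho>)\<^sup>2 + (Q / \<rho>)\<^sup>2 = 1"
    by (simp add: power_divide add_divide_distrib [symmetric] \<rho>2 [symmetric])
  then obtain \<beta> where "P / \<rho> = cos \<beta>" "Q / \<rho> = sin \<beta>"
    using sincos_total_2pi by metis
  with \<open>\<rho> > 0\<close> have "P = \<rho> * cos \<beta>" "Q = \<rho> * sin \<beta>"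
    by (simp_all add: divide_eq_eq mult.commute)
  then show ?thesis
    using that unfolding \<rho>_def by blast
qed

lemma rotation_between_equal_norms:
  fixes P Q W1 W2 :: real
  assumes "W1\<^sup>2 + W2\<^sup>2 = P\<^sup>2 + Q\<^sup>2"
  obtains \<beta> where "P = cos \<beta> * W1 - sin \<beta> * W2" "Q = sin \<beta> * W1 + cos \<beta> * W2"
proof -
  define \<rho> where "\<rho> = sqrt (P\<^sup>2 + Q\<^sup>2)"
  obtain \<gamma> where PQ: "P = \<rho> * cos \<gamma>" "Q = \<rho> * sin \<gamma>"
    unfolding \<rho>_def by (rule polar_coordinates)
  obtain \<alpha> where W: "W1 = \<rho> * cos \<alpha>" "W2 = \<rho> * sin \<alpha>"
    using polar_coordinates[of W1 W2] unfolding assms \<rho>_def .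
  have "P = \<rho> * cos ((\<gamma> - \<alpha>) + \<alpha>)" "Q = \<rho> * sin ((\<gamma> - \<alpha>) + \<alpha>)"
    by (simp_all add: PQ)
  then have "P = cos (\<gamma> - \<alpha>) * W1 - sin (\<gamma> - \<alpha>) * W2" "Q = sin (\<gamma> - \<alpha>) * W1 + cos (\<gamma> - \<alpha>) * W2"
    unfolding cos_add sin_add W by (simp_all only: right_diff_distrib distrib_left mult.left_commute)
  then show ?thesis by (rule that)
qed

lemma norm2_sum_of_circle_points:
  fixes a b \<phi> \<psi> :: real
  shows "(a * cos \<phi> + b * cos \<psi>)\<^sup>2 + (a * sin \<phi> + b * sin \<psi>)\<^sup>2 = a\<^sup>2 + b\<^sup>2 + 2 * a * b * cos (\<phi> - \<psi>)"
proof -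
  have unit: "c\<^sup>2 * (cos \<alpha>)\<^sup>2 + c\<^sup>2 * (sin \<alpha>)\<^sup>2 = c\<^sup>2" for c \<alpha> :: real
    by (simp flip: distrib_left)
  show ?thesis
    using unit[of a \<phi>] unit[of b \<psi>]
    by (simp add: cos_diff power2_sum power_mult_distrib algebra_simps)
qed

lemma square_abs_diff_sum:
  fixes a b :: real
  shows "(\<bar>a\<bar> - \<bar>b\<bar>)\<^sup>2 = a\<^sup>2 + b\<^sup>2 - 2 * \<bar>a\<bar> * \<bar>b\<bar>"
    and "(\<bar>a\<bar> + \<bar>b\<bar>)\<^sup>2 = a\<^sup>2 + b\<^sup>2 + 2 * \<bar>a\<bar> * \<bar>b\<bar>"
  by (simp_all add: power2_eq_square algebra_simps)

lemma sum_of_circle_points_iff: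
  fixes a b P Q :: real
  shows "(\<exists>\<phi> \<psi>. a * cos \<phi> + b * cos \<psi> = P \<and> a * sin \<phi> + b * sin \<psi> = Q) \<longleftrightarrow>
           (\<bar>a\<bar> - \<bar>b\<bar>)\<^sup>2 \<le> P\<^sup>2 + Q\<^sup>2 \<and> P\<^sup>2 + Q\<^sup>2 \<le> (\<bar>a\<bar> + \<bar>b\<bar>)\<^sup>2"
  (is "?reach \<longleftrightarrow> ?annulus")
proof
  assume ?reach
  then obtain \<phi> \<psi> where law_of_cosines: "P\<^sup>2 + Q\<^sup>2 = a\<^sup>2 + b\<^sup>2 + 2 * a * b * cos (\<phi> - \<psi>)"
    using norm2_sum_of_circle_points by metis
  have "\<bar>a * b * cos (\<phi> - \<psi>)\<bar> \<le> \<bar>a\<bar> * \<bar>b\<bar>"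
    by (simp add: abs_mult mult_left_le)
  then have "- (\<bar>a\<bar> * \<bar>b\<bar>) \<le> a * b * cos (\<phi> - \<psi>)" "a * b * cos (\<phi> - \<psi>) \<le> \<bar>a\<bar> * \<bar>b\<bar>"
    unfolding abs_le_iff by linarith+
  then show ?annulus
    unfolding square_abs_diff_sum law_of_cosines by linarith
next
  assume ?annulus
  then have bound: "\<bar>P\<^sup>2 + Q\<^sup>2 - a\<^sup>2 - b\<^sup>2\<bar> \<le> 2 * \<bar>a\<bar> * \<bar>b\<bar>"
    unfolding square_abs_diff_sum abs_le_iff by linarith
  have "\<exists>\<delta>. a\<^sup>2 + b\<^sup>2 + 2 * a * b * cos \<delta> = P\<^sup>2 + Q\<^sup>2"
  proof (cases "a * b = 0")
    case True
    with bound show ?thesis by auto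
  next
    case False
    define t where "t = (P\<^sup>2 + Q\<^sup>2 - a\<^sup>2 - b\<^sup>2) / (2 * a * b)"
    have "\<bar>t\<bar> \<le> 1"
      using False bound by (simp add: t_def abs_divide abs_mult divide_le_eq_1)
    then have "cos (arccos t) = t"
      by (simp add: abs_le_iff)
    then have "a\<^sup>2 + b\<^sup>2 + 2 * a * b * cos (arccos t) = P\<^sup>2 + Q\<^sup>2"
      using False by (simp add: t_def)
    then show ?thesis ..
  qed
  then obtain \<delta> where \<delta>: "a\<^sup>2 + b\<^sup>2 + 2 * a * b * cos \<delta> = P\<^sup>2 + Q\<^sup>2" ..
  define W1 where "W1 = a + b * cos \<delta>"
  define W2 where "W2 = - b * sin \<delta>"
  have "W1\<^sup>2 + W2\<^sup>2 = P\<^sup>2 + Q\<^sup>2"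
    using norm2_sum_of_circle_points[of a 0 b "- \<delta>"] \<delta>
    by (simp add: W1_def W2_def)
  then obtain \<phi> where "P = cos \<phi> * W1 - sin \<phi> * W2" "Q = sin \<phi> * W1 + cos \<phi> * W2"
    by (rule rotation_between_equal_norms)
  then have "a * cos \<phi> + b * cos (\<phi> - \<delta>) = P" "a * sin \<phi> + b * sin (\<phi> - \<delta>) = Q"
    by (simp_all add: W1_def W2_def cos_diff sin_diff algebra_simps)
  then show ?reach by blast
qed

lemma motion_three_turns:
  fixes v1 \<omega>1 v2 \<omega>2 v3 \<omega>3 x y \<theta> \<tau>1 \<tau>2 \<tau>3 :: real
  assumes "\<omega>1 \<noteq> 0" "\<omega>2 \<noteq> 0" "\<omega>3 \<noteq> 0"
  defines "r1 \<equiv> v1 / \<omega>1" and "r2 \<equiv> v2 / \<omega>2" and "r3 \<equiv> v3 / \<omega>3"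
  defines "\<theta>1 \<equiv> \<theta> + \<omega>1 * \<tau>1"
  defines "\<theta>2 \<equiv> \<theta>1 + \<omega>2 * \<tau>2"
  defines "\<theta>3 \<equiv> \<theta>2 + \<omega>3 * \<tau>3"
  shows "motion (v3, \<omega>3) \<tau>3 (motion (v2, \<omega>2) \<tau>2 (motion (v1, \<omega>1) \<tau>1 (x, y, \<theta>))) =
    (x - r1 * sin \<theta> + (r1 - r2) * sin \<theta>1 + (r2 - r3) * sin \<theta>2 + r3 * sin \<theta>3,
     y + r1 * cos \<theta> - (r1 - r2) * cos \<theta>1 - (r2 - r3) * cos \<theta>2 - r3 * cos \<theta>3,
     \<theta>3)"
  using assms by (simp add: motion_def algebra_simps)

lemma reachable3_turns_iff:
  fixes v1 \<omega>1 v2 \<omega>2 v3 \<omega>3 x0 y0 \<theta>0 xf yf \<theta>f :: real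
  assumes "\<omega>1 \<noteq> 0" "\<omega>2 \<noteq> 0" "\<omega>3 \<noteq> 0"
  defines "r1 \<equiv> v1 / \<omega>1" and "r2 \<equiv> v2 / \<omega>2" and "r3 \<equiv> v3 / \<omega>3"
  shows "reachable3 (v1, \<omega>1) (v2, \<omega>2) (v3, \<omega>3) (x0, y0, \<theta>0) (xf, yf, \<theta>f) \<longleftrightarrow>
    (\<exists>\<phi> \<psi>. (r1 - r2) * cos \<phi> + (r2 - r3) * cos \<psi> = y0 + r1 * cos \<theta>0 - r3 * cos \<theta>f - yf \<and>
            (r1 - r2) * sin \<phi> + (r2 - r3) * sin \<psi> = xf - (x0 - r1 * sin \<theta>0 + r3 * sin \<theta>f))"
  (is "_ \<longleftrightarrow> (\<exists>\<phi> \<psi>. ?meets \<phi> \<psi>)")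
proof -
  have reachable_iff: "reachable3 (v1, \<omega>1) (v2, \<omega>2) (v3, \<omega>3) (x0, y0, \<theta>0) (xf, yf, \<theta>f) \<longleftrightarrow>
    (\<exists>\<tau>1 \<tau>2 \<tau>3. admissible_dur (v1, \<omega>1) \<tau>1 \<and> admissible_dur (v2, \<omega>2) \<tau>2 \<and>
        admissible_dur (v3, \<omega>3) \<tau>3 \<and>
        (let \<theta>1 = \<theta>0 + \<omega>1 * \<tau>1; \<theta>2 = \<theta>1 + \<omega>2 * \<tau>2; \<theta>3 = \<theta>2 + \<omega>3 * \<tau>3 in
         x0 - r1 * sin \<theta>0 + (r1 - r2) * sin \<theta>1 + (r2 - r3) * sin \<theta>2 + r3 * sin \<theta>3 = xf \<and>
         y0 + r1 * cos \<theta>0 - (r1 - r2) * cos \<theta>1 - (r2 - r3) * cos \<theta>2 - r3 * cos \<theta>3 = yf \<and>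
         (\<exists>k::int. \<theta>3 = \<theta>f + 2 * pi * of_int k)))"
    unfolding reachable3_def r1_def r2_def r3_def motion_three_turns[OF assms(1-3)] by (simp add: Let_def)
  show ?thesis
  proof
    assume "reachable3 (v1, \<omega>1) (v2, \<omega>2) (v3, \<omega>3) (x0, y0, \<theta>0) (xf, yf, \<theta>f)"
    then obtain \<theta>1 \<theta>2 \<theta>3 and k :: int where
      "x0 - r1 * sin \<theta>0 + (r1 - r2) * sin \<theta>1 + (r2 - r3) * sin \<theta>2 + r3 * sin \<theta>3 = xf"
      "y0 + r1 * cos \<theta>0 - (r1 - r2) * cos \<theta>1 - (r2 - r3) * cos \<theta>2 - r3 * cos \<theta>3 = yf"
      "\<theta>3 = \<theta>f + 2 * pi * of_int k"
      unfolding reachable_iff Let_def by blast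
    moreover from this(3) have "sin \<theta>3 = sin \<theta>f" "cos \<theta>3 = cos \<theta>f"
      by (simp_all add: sin_cos_add_2pi_int)
    ultimately have "?meets \<theta>1 \<theta>2"
      by (simp only:) linarith
    then show "\<exists>\<phi> \<psi>. ?meets \<phi> \<psi>" by blast
  next
    assume "\<exists>\<phi> \<psi>. ?meets \<phi> \<psi>"
    then obtain \<phi> \<psi> where "?meets \<phi> \<psi>" by blast
    obtain \<tau>1 and k1 :: int where
      \<tau>1: "admissible_dur (v1, \<omega>1) \<tau>1" "\<theta>0 + \<omega>1 * \<tau>1 = \<phi> + 2 * pi * of_int k1"
      using admissible_turn_to_angle[OF assms(1)] .
    obtain \<tau>2 and k2 :: int where
      \<tau>2: "admissible_dur (v2, \<omega>2) \<tau>2" "\<theta>0 + \<omega>1 * \<tau>1 + \<omega>2 * \<tau>2 = \<psi> + 2 * pi * of_int k2"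
      using admissible_turn_to_angle[OF assms(2)] .
    obtain \<tau>3 and k3 :: int where
      \<tau>3: "admissible_dur (v3, \<omega>3) \<tau>3"
        "\<theta>0 + \<omega>1 * \<tau>1 + \<omega>2 * \<tau>2 + \<omega>3 * \<tau>3 = \<theta>f + 2 * pi * of_int k3"
      using admissible_turn_to_angle[OF assms(3)] .
    have "sin (\<theta>0 + \<omega>1 * \<tau>1) = sin \<phi>" "cos (\<theta>0 + \<omega>1 * \<tau>1) = cos \<phi>"
      unfolding \<tau>1(2) by (rule sin_cos_add_2pi_int)+
    moreover have "sin (\<theta>0 + \<omega>1 * \<tau>1 + \<omega>2 * \<tau>2) = sin \<psi>"
        "cos (\<theta>0 + \<omega>1 * \<tau>1 + \<omega>2 * \<tau>2) = cos \<psi>"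
      unfolding \<tau>2(2) by (rule sin_cos_add_2pi_int)+
    moreover have "sin (\<theta>0 + \<omega>1 * \<tau>1 + \<omega>2 * \<tau>2 + \<omega>3 * \<tau>3) = sin \<theta>f"
        "cos (\<theta>0 + \<omega>1 * \<tau>1 + \<omega>2 * \<tau>2 + \<omega>3 * \<tau>3) = cos \<theta>f"
      unfolding \<tau>3(2) by (rule sin_cos_add_2pi_int)+
    ultimately have
      "x0 - r1 * sin \<theta>0 + (r1 - r2) * sin (\<theta>0 + \<omega>1 * \<tau>1) + (r2 - r3) * sin (\<theta>0 + \<omega>1 * \<tau>1 + \<omega>2 * \<tau>2)
         + r3 * sin (\<theta>0 + \<omega>1 * \<tau>1 + \<omega>2 * \<tau>2 + \<omega>3 * \<tau>3) = xf"
      "y0 + r1 * cos \<theta>0 - (r1 - r2) * cos (\<theta>0 + \<omega>1 * \<tau>1) - (r2 - r3) * cos (\<theta>0 + \<omega>1 * \<tau>1 + \<omega>2 * \<tau>2)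
         - r3 * cos (\<theta>0 + \<omega>1 * \<tau>1 + \<omega>2 * \<tau>2 + \<omega>3 * \<tau>3) = yf"
      using \<open>?meets \<phi> \<psi>\<close> by (simp_all only:) linarith+
    then show "reachable3 (v1, \<omega>1) (v2, \<omega>2) (v3, \<omega>3) (x0, y0, \<theta>0) (xf, yf, \<theta>f)"
      unfolding reachable_iff Let_def using \<tau>1 \<tau>2 \<tau>3 by blast
  qed
qed

lemma mult_neg_of_sgn_ne:
  fixes x y :: real
  assumes "x \<noteq> 0" "y \<noteq> 0" "sgn x \<noteq> sgn y"
  shows "x * y < 0"
  using assms by (auto simp: sgn_if mult_pos_neg mult_neg_pos split: if_splits)

lemma diff_mult_diff_neg_of_alternating_signs:
  fixes x y z :: real
  assumes "x * y < 0" "y * z < 0"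
  shows "(x - y) * (y - z) < 0"
  using assms by (cases "y > 0") (auto simp: mult_less_0_iff)

theorem theorem2:
  fixes x0 y0 \<theta>0 xf yf \<theta>f v1 \<omega>1 v2 \<omega>2 v3 \<omega>3 :: real
  assumes "v1 > 0" "v2 > 0" "v3 > 0"
    and "\<omega>1 \<noteq> 0" "\<omega>2 \<noteq> 0" "\<omega>3 \<noteq> 0"
    and "sgn \<omega>1 \<noteq> sgn \<omega>2" "sgn \<omega>2 \<noteq> sgn \<omega>3"
  defines "r1 \<equiv> v1 / \<omega>1" and "r2 \<equiv> v2 / \<omega>2" and "r3 \<equiv> v3 / \<omega>3"
  defines "c \<equiv> x0 - r1 * sin \<theta>0 + r3 * sin \<theta>f"
    and "d \<equiv> y0 + r1 * cos \<theta>0 - r3 * cos \<theta>f"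
  shows "reachable3 (v1, \<omega>1) (v2, \<omega>2) (v3, \<omega>3) (x0, y0, \<theta>0) (xf, yf, \<theta>f) \<longleftrightarrow>
           (r3 - r1)^2 \<le> (xf - c)^2 + (yf - d)^2 \<and>
           (xf - c)^2 + (yf - d)^2 \<le> ((r1 - r2) - (r2 - r3))^2"
proof -
  have "\<omega>1 * \<omega>2 < 0" "\<omega>2 * \<omega>3 < 0"
    using assms(4-8) by (simp_all add: mult_neg_of_sgn_ne)
  then have "r1 * r2 < 0" "r2 * r3 < 0"
    using assms(1-3) by (simp_all add: r1_def r2_def r3_def divide_less_0_iff)
  then have "(r1 - r2) * (r2 - r3) < 0"
    by (rule diff_mult_diff_neg_of_alternating_signs)
  then have radii: "(\<bar>r1 - r2\<bar> - \<bar>r2 - r3\<bar>)\<^sup>2 = (r3 - r1)\<^sup>2"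
      "(\<bar>r1 - r2\<bar> + \<bar>r2 - r3\<bar>)\<^sup>2 = ((r1 - r2) - (r2 - r3))\<^sup>2"
    unfolding square_abs_diff_sum by (simp_all add: abs_mult [symmetric] power2_eq_square algebra_simps)
  have "reachable3 (v1, \<omega>1) (v2, \<omega>2) (v3, \<omega>3) (x0, y0, \<theta>0) (xf, yf, \<theta>f) \<longleftrightarrow>
      (\<exists>\<phi> \<psi>. (r1 - r2) * cos \<phi> + (r2 - r3) * cos \<psi> = d - yf \<and>
              (r1 - r2) * sin \<phi> + (r2 - r3) * sin \<psi> = xf - c)"
    unfolding reachable3_turns_iff[OF assms(4-6)] r1_def r2_def r3_def c_def d_def ..
  also have "\<dots> \<longleftrightarrow> (\<bar>r1 - r2\<bar> - \<bar>r2 - r3\<bar>)\<^sup>2 \<le> (d - yf)\<^sup>2 + (xf - c)\<^sup>2 \<and>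
      (d - yf)\<^sup>2 + (xf - c)\<^sup>2 \<le> (\<bar>r1 - r2\<bar> + \<bar>r2 - r3\<bar>)\<^sup>2"
    by (rule sum_of_circle_points_iff)
  finally show ?thesis
    unfolding radii by (simp add: power2_commute add.commute)
qed

end
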